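(* Let $G=(V,E)$ be a finite connected simple graph with vertex-weight $m_0\colon V\to\mathbb{R}_{>0}$ and distance parameter $d\colon E\to\mathbb{R}_{>0}$; set $M=\sum_{u\in V}m_0(u)$ and $D^2=\sum_{uv\in E}d(uv)^2$. Then $$\delta(G,m_0,d)=\max\Big\{1-\frac{D^2/M}{\sigma(G,m_0,d)},\,0\Big\}.$$
   Context: Edges are unordered pairs; $v\sim u$ means $uv\in E$; $\|\cdot\|$ is the Euclidean norm on $\mathbb{R}^{|V|}$. $\mathrm{bar}(\varphi)=\frac1M\sum_u m_0(u)\varphi(u)$. $\delta(G,m_0,d)=\inf\|\mathrm{bar}(\varphi)\|^2$ over all $\varphi\colon V\to\mathbb{R}^{|V|}$ with $\sum_u m_0(u)\|\varphi(u)\|^2=M$ and $\|\varphi(u)-\varphi(v)\|\le d(uv)$ for all $uv\in E$. For an edge-weight $m_1\colon E\to\mathbb{R}_{\ge0}$ with $(V,\{uv:m_1(uv)>0\})$ connected, the Laplacian is $(\Delta_{(m_0,m_1)}f)(u)=\frac{1}{m_0(u)}\big[(\sum_{v\sim u}m_1(uv))f(u)-\sum_{v\sim u}m_1(uv)f(v)\big]$ and $\lambda_1(G,(m_0,m_1))$ is its smallest positive eigenvalue, equivalently $\inf_f\frac{\sum_{uv}m_1(uv)(f(u)-f(v))^2}{\sum_u m_0(u)(f(u)-\bar f)^2}$ over nonconstant $f$, $\bar f=\frac1M\sum_u m_0(u)f(u)$. $\sigma(G,m_0,d)=\sup_{m_1}\lambda_1(G,(m_0,m_1))$ over all such edge-weights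 $m_1$ with $\sum_{uv\in E}m_1(uv)d(uv)^2=D^2$. *)

theory Defs
  imports Complex_Main
begin

definition simple_graph :: "'a set \<Rightarrow> 'a set set \<Rightarrow> bool" where
  "simple_graph V E \<longleftrightarrow> finite V \<and>
     (\<forall>e\<in>E. \<exists>u v. e = {u, v} \<and> u \<noteq> v \<and> u \<in> V \<and> v \<in> V)"

definition connected_graph :: "'a set \<Rightarrow> 'a set set \<Rightarrow> bool" where
  "connected_graph V E \<longleftrightarrow> V \<noteq> {} \<and>
     (\<forall>u\<in>V. \<forall>v\<in>V. (u, v) \<in> ({(x, y). {x, y} \<in> E})\<^sup>*)"

text \<open>Vectors in R^|V| are represented with coordinates indexed by V itself.\<close>
definition vnorm2 :: "'a set \<Rightarrow> ('a \<Rightarrow> real) \<Rightarrow> real" where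
  "vnorm2 V x = (\<Sum>i\<in>V. (x i)\<^sup>2)"

definition vnorm :: "'a set \<Rightarrow> ('a \<Rightarrow> real) \<Rightarrow> real" where
  "vnorm V x = sqrt (vnorm2 V x)"

definition total_mass :: "'a set \<Rightarrow> ('a \<Rightarrow> real) \<Rightarrow> real" where
  "total_mass V m0 = (\<Sum>u\<in>V. m0 u)"

definition Dsq :: "'a set set \<Rightarrow> ('a set \<Rightarrow> real) \<Rightarrow> real" where
  "Dsq E d = (\<Sum>e\<in>E. (d e)\<^sup>2)"

definition bary :: "'a set \<Rightarrow> ('a \<Rightarrow> real) \<Rightarrow> ('a \<Rightarrow> 'a \<Rightarrow> real) \<Rightarrow> ('a \<Rightarrow> real)" where
  "bary V m0 \<phi> = (\<lambda>i. (1 / total_mass V m0) * (\<Sum>u\<in>V. m0 u * \<phi> u i))"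

definition admissible_map ::
  "'a set \<Rightarrow> 'a set set \<Rightarrow> ('a \<Rightarrow> real) \<Rightarrow> ('a set \<Rightarrow> real) \<Rightarrow> ('a \<Rightarrow> 'a \<Rightarrow> real) \<Rightarrow> bool" where
  "admissible_map V E m0 d \<phi> \<longleftrightarrow>
     (\<Sum>u\<in>V. m0 u * vnorm2 V (\<phi> u)) = total_mass V m0 \<and>
     (\<forall>u v. {u, v} \<in> E \<longrightarrow> vnorm V (\<lambda>i. \<phi> u i - \<phi> v i) \<le> d {u, v})"

definition delta_inv ::
  "'a set \<Rightarrow> 'a set set \<Rightarrow> ('a \<Rightarrow> real) \<Rightarrow> ('a set \<Rightarrow> real) \<Rightarrow> real" where
  "delta_inv V E m0 d = Inf {vnorm2 V (bary V m0 \<phi>) | \<phi>. admissible_map V E m0 d \<phi>}"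

text \<open>Rayleigh quotient characterisation of the first positive Laplacian eigenvalue.
  The edge sum over unordered edges is written as half the sum over ordered pairs.\<close>
definition edge_energy :: "'a set \<Rightarrow> 'a set set \<Rightarrow> ('a set \<Rightarrow> real) \<Rightarrow> ('a \<Rightarrow> real) \<Rightarrow> real" where
  "edge_energy V E m1 f =
     (1/2) * (\<Sum>u\<in>V. \<Sum>v\<in>V. if {u, v} \<in> E then m1 {u, v} * (f u - f v)\<^sup>2 else 0)"

definition mean_val :: "'a set \<Rightarrow> ('a \<Rightarrow> real) \<Rightarrow> ('a \<Rightarrow> real) \<Rightarrow> real" where
  "mean_val V m0 f = (1 / total_mass V m0) * (\<Sum>u\<in>V. m0 u * f u)"

definition lambda1 ::
  "'a set \<Rightarrow> 'a set set \<Rightarrow> ('a \<Rightarrow> real) \<Rightarrow> ('a set \<Rightarrow> real) \<Rightarrow> real" where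
  "lambda1 V E m0 m1 = Inf {edge_energy V E m1 f /
        (\<Sum>u\<in>V. m0 u * (f u - mean_val V m0 f)\<^sup>2) | f.
        \<exists>u\<in>V. \<exists>v\<in>V. f u \<noteq> f v}"

definition admissible_edge_weight ::
  "'a set \<Rightarrow> 'a set set \<Rightarrow> ('a set \<Rightarrow> real) \<Rightarrow> ('a set \<Rightarrow> real) \<Rightarrow> bool" where
  "admissible_edge_weight V E d m1 \<longleftrightarrow>
     (\<forall>e\<in>E. m1 e \<ge> 0) \<and>
     connected_graph V {e\<in>E. m1 e > 0} \<and>
     (\<Sum>e\<in>E. m1 e * (d e)\<^sup>2) = Dsq E d"

definition sigma_inv ::
  "'a set \<Rightarrow> 'a set set \<Rightarrow> ('a \<Rightarrow> real) \<Rightarrow> ('a set \<Rightarrow> real) \<Rightarrow> real" where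
  "sigma_inv V E m0 d = Sup {lambda1 V E m0 m1 | m1. admissible_edge_weight V E d m1}"

end

theory Submission
  imports Defs
begin

(* If phi is admissible, the Rayleigh quotient of an admissible edge weight m1, applied to each
   coordinate of phi and summed over the coordinates, gives
   lambda1(m1) * M * (1 - |bar phi|^2) <= D^2, hence delta >= 1 - D^2 / (M sigma).

   Conversely let S < min M (D^2 / sigma). For every edge e = uv, the quantity
   S * sum_j (F_j u - F_j v)^2 / d(e)^2 - sum_j Var(F_j) is a convex-like function of a finite
   family (F_j) of functions on V. If no family had all spreads
   sum_j (F_j u - F_j v)^2 <= d(uv)^2 and total variance S, a theorem of the alternative would
   give weights y_e >= 0 summing to 1 whose combination of these functions is nonnegative, and
   m1 = y D^2 / d^2 would be an admissible edge weight with lambda1(m1) >= D^2 / S > sigma.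
   A good family can be centered and then, keeping its Gram kernel, cut down to fewer than |V|
   members. Placed on coordinates of R^V other than one coordinate z, and completed by the
   constant sqrt (1 - S / M) on z, it becomes an admissible map whose barycenter has squared
   norm 1 - S / M. Letting S increase to min M (D^2 / sigma) gives delta <= the right-hand side. *)

lemma simple_graph_finite: "simple_graph V E \<Longrightarrow> finite V"
  by (simp add: simple_graph_def)

lemma simple_graph_finite_edges:
  assumes "simple_graph V E"
  shows "finite E"
proof -
  have "E \<subseteq> Pow V"
    using assms unfolding simple_graph_def by fastforce
  then show ?thesis
    using simple_graph_finite[OF assms] by (meson finite_Pow_iff finite_subset)
qed

lemma simple_graph_edgeE:
  assumes "simple_graph V E" "e \<in> E"
  obtains u v where "e = {u, v}" "u \<noteq> v" "u \<in> V" "v \<in> V"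
  using assms unfolding simple_graph_def by blast

lemma simple_graph_edge_vertices:
  assumes "simple_graph V E" "{u, v} \<in> E"
  shows "u \<in> V" "v \<in> V"
  using assms by (metis doubleton_eq_iff simple_graph_edgeE)+

lemma connected_graph_edges_nonempty:
  assumes "connected_graph V E" "u \<in> V" "v \<in> V" "u \<noteq> v"
  shows "E \<noteq> {}"
proof
  assume "E = {}"
  then have "(u, v) \<in> Id"
    using assms(1-3) unfolding connected_graph_def by auto
  then show False
    using assms(4) by simp
qed

lemma Dsq_pos:
  assumes "simple_graph V E" "E \<noteq> {}" "\<forall>e\<in>E. d e > 0"
  shows "Dsq E d > 0"
  unfolding Dsq_def using assms simple_graph_finite_edges[OF assms(1)] by (intro sum_pos) auto

lemma sum_ordered_pairs_eq_twice_sum_edges: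
  fixes h :: "'a set \<Rightarrow> 'b::comm_semiring_1"
  assumes "simple_graph V E"
  shows "(\<Sum>u\<in>V. \<Sum>v\<in>V. if {u, v} \<in> E then h {u, v} else 0) = 2 * (\<Sum>e\<in>E. h e)"
proof -
  have fV: "finite V" and fE: "finite E"
    using assms simple_graph_finite simple_graph_finite_edges by blast+
  let ?P = "{p\<in>V\<times>V. {fst p, snd p} \<in> E}"
  have "(\<Sum>u\<in>V. \<Sum>v\<in>V. if {u, v} \<in> E then h {u, v} else 0)
      = (\<Sum>p\<in>V\<times>V. if {fst p, snd p} \<in> E then h {fst p, snd p} else 0)"
    by (simp add: sum.cartesian_product split_def)
  also have "\<dots> = (\<Sum>p\<in>?P. h {fst p, snd p})"
    using fV by (simp add: sum.inter_filter)
  also have "\<dots> = (\<Sum>e\<in>E. \<Sum>p\<in>{p\<in>?P. {fst p, snd p} = e}. h {fst p, snd p})"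
    by (rule sum.group[symmetric]) (use fV fE in auto)
  also have "\<dots> = (\<Sum>e\<in>E. 2 * h e)"
  proof (rule sum.cong[OF refl])
    fix e assume "e \<in> E"
    obtain a b where ab: "e = {a, b}" "a \<noteq> b" "a \<in> V" "b \<in> V"
      by (rule simple_graph_edgeE[OF assms \<open>e \<in> E\<close>])
    have "{p\<in>?P. {fst p, snd p} = e} = {(a, b), (b, a)}"
      using ab \<open>e \<in> E\<close> by (auto simp: doubleton_eq_iff insert_commute)
    then show "(\<Sum>p\<in>{p\<in>?P. {fst p, snd p} = e}. h {fst p, snd p}) = 2 * h e"
      using ab by (simp add: insert_commute mult_2)
  qed
  finally show ?thesis
    by (simp add: sum_distrib_left)
qed

text \<open>Half the sum over ordered pairs of ends, so that no orientation of the edge has to be chosen.\<close>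
definition edge_sqdiff :: "('a \<Rightarrow> real) \<Rightarrow> 'a set \<Rightarrow> real" where
  "edge_sqdiff f e = (1/2) * (\<Sum>u\<in>e. \<Sum>v\<in>e. (f u - f v)\<^sup>2)"

lemma edge_sqdiff_doubleton [simp]: "edge_sqdiff f {u, v} = (f u - f v)\<^sup>2"
  by (cases "u = v") (simp_all add: edge_sqdiff_def power2_commute)

lemma edge_sqdiff_nonneg: "edge_sqdiff f e \<ge> 0"
  unfolding edge_sqdiff_def by (simp add: sum_nonneg)

lemma edge_sqdiff_scale: "edge_sqdiff (\<lambda>u. c * f u) e = c\<^sup>2 * edge_sqdiff f e"
  unfolding edge_sqdiff_def
  by (simp add: sum_distrib_left power2_eq_square algebra_simps)

lemma edge_energy_eq_sum_edges:
  assumes "simple_graph V E"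
  shows "edge_energy V E m1 f = (\<Sum>e\<in>E. m1 e * edge_sqdiff f e)"
proof -
  have "(\<Sum>u\<in>V. \<Sum>v\<in>V. if {u, v} \<in> E then m1 {u, v} * (f u - f v)\<^sup>2 else 0)
      = 2 * (\<Sum>e\<in>E. m1 e * edge_sqdiff f e)"
    using sum_ordered_pairs_eq_twice_sum_edges[OF assms, of "\<lambda>e. m1 e * edge_sqdiff f e"]
    by (simp only: edge_sqdiff_doubleton)
  then show ?thesis
    unfolding edge_energy_def by simp
qed

lemma edge_energy_nonneg: "\<forall>e\<in>E. m1 e \<ge> 0 \<Longrightarrow> edge_energy V E m1 f \<ge> 0"
  unfolding edge_energy_def by (auto intro!: sum_nonneg)

lemma sq_diff_le_edge_energy:
  assumes "simple_graph V E" "{u, v} \<in> E"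
  shows "(f u - f v)\<^sup>2 \<le> edge_energy V E (\<lambda>_. 1) f"
proof -
  have "(f u - f v)\<^sup>2 = edge_sqdiff f {u, v}"
    by simp
  also have "\<dots> \<le> (\<Sum>e\<in>E. edge_sqdiff f e)"
    using assms simple_graph_finite_edges[OF assms(1)]
    by (intro member_le_sum) (auto simp: edge_sqdiff_nonneg)
  finally show ?thesis
    by (simp add: edge_energy_eq_sum_edges[OF assms(1)])
qed

definition weighted_variance :: "'a set \<Rightarrow> ('a \<Rightarrow> real) \<Rightarrow> ('a \<Rightarrow> real) \<Rightarrow> real" where
  "weighted_variance V m0 f = (\<Sum>u\<in>V. m0 u * (f u - mean_val V m0 f)\<^sup>2)"

lemma total_mass_pos:
  "finite V \<Longrightarrow> V \<noteq> {} \<Longrightarrow> \<forall>u\<in>V. m0 u > 0 \<Longrightarrow> total_mass V m0 > 0"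
  unfolding total_mass_def by (simp add: sum_pos)

lemma sum_weighted_eq_total_mass_mean:
  "total_mass V m0 \<noteq> 0 \<Longrightarrow> (\<Sum>u\<in>V. m0 u * f u) = total_mass V m0 * mean_val V m0 f"
  unfolding mean_val_def by simp

lemma weighted_moment_eq_variance:
  assumes "total_mass V m0 \<noteq> 0"
  shows "(\<Sum>u\<in>V. m0 u * (f u - c)\<^sup>2)
    = weighted_variance V m0 f + total_mass V m0 * (mean_val V m0 f - c)\<^sup>2"
proof -
  define \<mu> where "\<mu> = mean_val V m0 f"
  define M where "M = total_mass V m0"
  have "(\<Sum>u\<in>V. m0 u * (f u - c)\<^sup>2)
      = (\<Sum>u\<in>V. m0 u * (f u - \<mu>)\<^sup>2 + 2 * (\<mu> - c) * (m0 u * f u) - (\<mu>\<^sup>2 - c\<^sup>2) * m0 u)"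
    by (rule sum.cong[OF refl]) (simp add: power2_eq_square algebra_simps)
  also have "\<dots> = weighted_variance V m0 f + 2 * (\<mu> - c) * (\<Sum>u\<in>V. m0 u * f u)
      - (\<mu>\<^sup>2 - c\<^sup>2) * (\<Sum>u\<in>V. m0 u)"
    unfolding weighted_variance_def \<mu>_def by (simp add: sum.distrib sum_subtractf sum_distrib_left)
  also have "\<dots> = weighted_variance V m0 f + 2 * (\<mu> - c) * (M * \<mu>) - (\<mu>\<^sup>2 - c\<^sup>2) * M"
    using sum_weighted_eq_total_mass_mean[OF assms, of f]
    unfolding M_def \<mu>_def total_mass_def by simp
  also have "\<dots> = weighted_variance V m0 f + M * (\<mu> - c)\<^sup>2"
    by (simp add: power2_eq_square algebra_simps)
  finally show ?thesis
    unfolding M_def \<mu>_def .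
qed

lemma weighted_variance_nonneg: "\<forall>u\<in>V. m0 u > 0 \<Longrightarrow> weighted_variance V m0 f \<ge> 0"
  unfolding weighted_variance_def by (auto intro!: sum_nonneg)

lemma weighted_variance_le_moment:
  "total_mass V m0 > 0 \<Longrightarrow> weighted_variance V m0 f \<le> (\<Sum>u\<in>V. m0 u * (f u - c)\<^sup>2)"
  using weighted_moment_eq_variance[of V m0 f c] by simp

lemma weighted_variance_centered:
  assumes "total_mass V m0 \<noteq> 0" "(\<Sum>u\<in>V. m0 u * f u) = 0"
  shows "weighted_variance V m0 f = (\<Sum>u\<in>V. m0 u * (f u)\<^sup>2)"
proof -
  have "mean_val V m0 f = 0"
    using assms unfolding mean_val_def by simp
  then show ?thesis
    using weighted_moment_eq_variance[OF assms(1), of f 0] by simp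
qed

lemma weighted_variance_pos:
  assumes "finite V" "\<forall>u\<in>V. m0 u > 0" "u \<in> V" "v \<in> V" "f u \<noteq> f v"
  shows "weighted_variance V m0 f > 0"
proof (rule ccontr)
  let ?g = "\<lambda>x. m0 x * (f x - mean_val V m0 f)\<^sup>2"
  assume "\<not> weighted_variance V m0 f > 0"
  then have "sum ?g V = 0"
    using weighted_variance_nonneg[OF assms(2), of f] unfolding weighted_variance_def by linarith
  then have "\<forall>x\<in>V. ?g x = 0"
    using assms(1,2) by (subst (asm) sum_nonneg_eq_0_iff) (auto simp: less_imp_le)
  then have "\<forall>x\<in>V. f x = mean_val V m0 f"
    using assms(2) by force
  then show False
    using assms(3-5) by auto
qed

lemma weighted_variance_scale:
  "weighted_variance V m0 (\<lambda>u. c * f u) = c\<^sup>2 * weighted_variance V m0 f"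
proof -
  have "mean_val V m0 (\<lambda>u. c * f u) = c * mean_val V m0 f"
    unfolding mean_val_def by (simp add: sum_distrib_left algebra_simps)
  then show ?thesis
    unfolding weighted_variance_def by (simp add: sum_distrib_left power2_eq_square algebra_simps)
qed

lemma weighted_variance_translate:
  assumes "total_mass V m0 \<noteq> 0"
  shows "weighted_variance V m0 (\<lambda>u. f u - c) = weighted_variance V m0 f"
proof -
  have "mean_val V m0 (\<lambda>u. f u - c) = mean_val V m0 f - c"
    using assms unfolding mean_val_def total_mass_def
    by (simp add: sum_subtractf sum_distrib_left[symmetric] algebra_simps)
  then show ?thesis
    unfolding weighted_variance_def by simp
qed

lemma lambda1_eq_Inf_rayleigh:
  "lambda1 V E m0 m1 = Inf {edge_energy V E m1 f / weighted_variance V m0 f | f. \<exists>u\<in>V. \<exists>v\<in>V. f u \<noteq> f v}"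
  unfolding lambda1_def weighted_variance_def ..

lemma lambda1_le_rayleigh:
  assumes "\<forall>u\<in>V. m0 u > 0" "\<forall>e\<in>E. m1 e \<ge> 0" "u \<in> V" "v \<in> V" "f u \<noteq> f v"
  shows "lambda1 V E m0 m1 \<le> edge_energy V E m1 f / weighted_variance V m0 f"
  unfolding lambda1_eq_Inf_rayleigh
proof (rule cInf_lower)
  show "bdd_below {edge_energy V E m1 f / weighted_variance V m0 f | f. \<exists>u\<in>V. \<exists>v\<in>V. f u \<noteq> f v}"
    using edge_energy_nonneg[OF assms(2)] weighted_variance_nonneg[OF assms(1)]
    by (intro bdd_belowI[of _ 0]) auto
qed (use assms(3-5) in blast)

lemma lambda1_mul_variance_le_energy:
  assumes "finite V" "\<forall>u\<in>V. m0 u > 0" "\<forall>e\<in>E. m1 e \<ge> 0"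
  shows "lambda1 V E m0 m1 * weighted_variance V m0 f \<le> edge_energy V E m1 f"
proof (cases "\<exists>u\<in>V. \<exists>v\<in>V. f u \<noteq> f v")
  case True
  then obtain u v where uv: "u \<in> V" "v \<in> V" "f u \<noteq> f v"
    by blast
  then show ?thesis
    using lambda1_le_rayleigh[OF assms(2,3) uv] weighted_variance_pos[OF assms(1,2) uv]
    by (simp add: pos_le_divide_eq)
next
  case False
  show ?thesis
  proof (cases "V = {}")
    case True
    then show ?thesis
      using edge_energy_nonneg[OF assms(3)] by (simp add: weighted_variance_def)
  next
    case nonempty: False
    then obtain w where "w \<in> V"
      by blast
    then have const: "\<forall>u\<in>V. f u = f w"
      using False by blast
    have "weighted_variance V m0 f \<le> (\<Sum>u\<in>V. m0 u * (f u - f w)\<^sup>2)"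
      using total_mass_pos[OF assms(1) nonempty assms(2)] by (rule weighted_variance_le_moment)
    also have "\<dots> = 0"
      using const by simp
    finally show ?thesis
      using weighted_variance_nonneg[OF assms(2), of f] edge_energy_nonneg[OF assms(3)] by simp
  qed
qed

lemma le_lambda1:
  assumes "finite V" "\<forall>u\<in>V. m0 u > 0" "u \<in> V" "v \<in> V" "u \<noteq> v"
    and "\<And>f. c * weighted_variance V m0 f \<le> edge_energy V E m1 f"
  shows "c \<le> lambda1 V E m0 m1"
  unfolding lambda1_eq_Inf_rayleigh
proof (rule cInf_greatest)
  let ?f = "\<lambda>x. if x = u then 1 else 0 :: real"
  have "edge_energy V E m1 ?f / weighted_variance V m0 ?f
      \<in> {edge_energy V E m1 f / weighted_variance V m0 f | f. \<exists>u\<in>V. \<exists>v\<in>V. f u \<noteq> f v}"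
    using assms(3-5) by force
  then show "{edge_energy V E m1 f / weighted_variance V m0 f | f. \<exists>u\<in>V. \<exists>v\<in>V. f u \<noteq> f v} \<noteq> {}"
    by blast
  fix x
  assume "x \<in> {edge_energy V E m1 f / weighted_variance V m0 f | f. \<exists>u\<in>V. \<exists>v\<in>V. f u \<noteq> f v}"
  then obtain g a b where g: "x = edge_energy V E m1 g / weighted_variance V m0 g"
    "a \<in> V" "b \<in> V" "g a \<noteq> g b"
    by blast
  then show "c \<le> x"
    using weighted_variance_pos[OF assms(1,2) g(2-4)] assms(6)[of g] by (simp add: pos_le_divide_eq)
qed

lemma admissible_edge_weight_one: "connected_graph V E \<Longrightarrow> admissible_edge_weight V E d (\<lambda>_. 1)"
  unfolding admissible_edge_weight_def Dsq_def by simp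

lemma abs_diff_le_walk:
  fixes f :: "'a \<Rightarrow> real"
  assumes "simple_graph V E"
  shows "(x, y) \<in> {(a, b). {a, b} \<in> E} ^^ n \<Longrightarrow>
    \<bar>f x - f y\<bar> \<le> real n * sqrt (edge_energy V E (\<lambda>_. 1) f)"
proof (induction n arbitrary: y)
  case (Suc n)
  then obtain z where z: "(x, z) \<in> {(a, b). {a, b} \<in> E} ^^ n" "{z, y} \<in> E"
    by auto
  have "\<bar>f z - f y\<bar> \<le> sqrt (edge_energy V E (\<lambda>_. 1) f)"
    using sq_diff_le_edge_energy[OF assms z(2)] real_le_rsqrt by (metis power2_abs)
  then show ?case
    using Suc.IH[OF z(1)] by (simp add: algebra_simps)
qed simp

lemma sq_diff_le_walk_energy:
  fixes f :: "'a \<Rightarrow> real"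
  assumes "simple_graph V E" "(x, y) \<in> {(a, b). {a, b} \<in> E} ^^ n"
  shows "(f x - f y)\<^sup>2 \<le> (real n)\<^sup>2 * edge_energy V E (\<lambda>_. 1) f"
proof -
  have "\<bar>f x - f y\<bar>\<^sup>2 \<le> (real n * sqrt (edge_energy V E (\<lambda>_. 1) f))\<^sup>2"
    using abs_diff_le_walk[OF assms] by (rule power_mono) simp
  then show ?thesis
    by (simp add: power_mult_distrib edge_energy_nonneg)
qed

lemma sq_diff_le_energy_connected:
  assumes sg: "simple_graph V E" and cg: "connected_graph V E" and u: "u \<in> V"
  obtains K where "K \<ge> 0" "\<And>x f. x \<in> V \<Longrightarrow> (f x - f u)\<^sup>2 \<le> K * edge_energy V E (\<lambda>_. 1) f"
proof -
  have fV: "finite V"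
    using simple_graph_finite[OF sg] .
  have "\<forall>x\<in>V. (x, u) \<in> {(a, b). {a, b} \<in> E}\<^sup>*"
    using cg u unfolding connected_graph_def by blast
  then have walks: "\<forall>x\<in>V. \<exists>n. (x, u) \<in> {(a, b). {a, b} \<in> E} ^^ n"
    by (simp add: rtrancl_power)
  obtain N where N: "\<forall>x\<in>V. (x, u) \<in> {(a, b). {a, b} \<in> E} ^^ N x"
    using finite_set_choice[OF fV walks] by blast
  define K where "K = (real (Max (N ` V)))\<^sup>2"
  have "(f x - f u)\<^sup>2 \<le> K * edge_energy V E (\<lambda>_. 1) f" if x: "x \<in> V" for x f
  proof -
    have "(real (N x))\<^sup>2 \<le> K"
      unfolding K_def using fV x by (simp add: power_mono)
    then have "(real (N x))\<^sup>2 * edge_energy V E (\<lambda>_. 1) f \<le> K * edge_energy V E (\<lambda>_. 1) f"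
      by (intro mult_right_mono) (simp_all add: edge_energy_nonneg)
    then show ?thesis
      using sq_diff_le_walk_energy[OF sg N[rule_format, OF x], of f] by linarith
  qed
  then show ?thesis
    using that[of K] unfolding K_def by simp
qed

lemma lambda1_unit_weight_pos:
  assumes sg: "simple_graph V E" and cg: "connected_graph V E" and m0: "\<forall>u\<in>V. m0 u > 0"
    and uv: "u \<in> V" "v \<in> V" "u \<noteq> v"
  shows "lambda1 V E m0 (\<lambda>_. 1) > 0"
proof -
  have fV: "finite V"
    using simple_graph_finite[OF sg] .
  obtain K where K: "K \<ge> 0" "\<And>x f. x \<in> V \<Longrightarrow> (f x - f u)\<^sup>2 \<le> K * edge_energy V E (\<lambda>_. 1) f"
    using sq_diff_le_energy_connected[OF sg cg uv(1)] by blast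
  define M where "M = total_mass V m0"
  have "M > 0"
    using total_mass_pos[OF fV _ m0] uv M_def by blast
  then have MK: "M * (K + 1) > 0"
    using K(1) by simp
  have "weighted_variance V m0 f / (M * (K + 1)) \<le> edge_energy V E (\<lambda>_. 1) f" for f
  proof -
    have "weighted_variance V m0 f \<le> (\<Sum>x\<in>V. m0 x * (f x - f u)\<^sup>2)"
      using MK K(1) M_def by (intro weighted_variance_le_moment) (simp add: zero_less_mult_iff)
    also have "\<dots> \<le> (\<Sum>x\<in>V. m0 x * ((K + 1) * edge_energy V E (\<lambda>_. 1) f))"
    proof (intro sum_mono mult_left_mono)
      fix x assume "x \<in> V"
      then show "(f x - f u)\<^sup>2 \<le> (K + 1) * edge_energy V E (\<lambda>_. 1) f"
        using K(2)[of x f] edge_energy_nonneg[of E "\<lambda>_. 1" V f] by (simp add: distrib_right)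
    qed (use m0 in \<open>simp add: less_imp_le\<close>)
    also have "\<dots> = M * (K + 1) * edge_energy V E (\<lambda>_. 1) f"
      unfolding M_def total_mass_def by (simp add: sum_distrib_right mult.assoc)
    finally show ?thesis
      using MK by (simp add: pos_divide_le_eq mult.commute)
  qed
  then have "1 / (M * (K + 1)) \<le> lambda1 V E m0 (\<lambda>_. 1)"
    using le_lambda1[OF fV m0 uv] by simp
  moreover have "1 / (M * (K + 1)) > 0"
    using MK by simp
  ultimately show ?thesis
    by linarith
qed

lemma lambda1_bdd_above:
  assumes sg: "simple_graph V E" and m0: "\<forall>u\<in>V. m0 u > 0" and d: "\<forall>e\<in>E. d e > 0"
    and uv: "u \<in> V" "v \<in> V" "u \<noteq> v"
  shows "bdd_above {lambda1 V E m0 m1 | m1. admissible_edge_weight V E d m1}"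
proof -
  define f where "f x = (if x = u then 1 else 0 :: real)" for x
  have fuv: "f u \<noteq> f v"
    using uv f_def by simp
  have "lambda1 V E m0 m1 \<le> (\<Sum>e\<in>E. Dsq E d / (d e)\<^sup>2) / weighted_variance V m0 f"
    if m1: "admissible_edge_weight V E d m1" for m1
  proof -
    have m1_nonneg: "\<forall>e\<in>E. m1 e \<ge> 0" and m1_sum: "(\<Sum>e\<in>E. m1 e * (d e)\<^sup>2) = Dsq E d"
      using m1 unfolding admissible_edge_weight_def by blast+
    have "m1 e * edge_sqdiff f e \<le> Dsq E d / (d e)\<^sup>2" if e: "e \<in> E" for e
    proof -
      have "m1 e * (d e)\<^sup>2 \<le> Dsq E d"
        using e m1_nonneg simple_graph_finite_edges[OF sg] unfolding m1_sum[symmetric]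
        by (intro member_le_sum) auto
      moreover have "(d e)\<^sup>2 > 0"
        using d e by force
      ultimately have "m1 e \<le> Dsq E d / (d e)\<^sup>2"
        by (simp add: pos_le_divide_eq)
      moreover obtain a b where "e = {a, b}"
        using simple_graph_edgeE[OF sg e] by metis
      then have "edge_sqdiff f e \<le> 1"
        unfolding f_def by simp
      then have "m1 e * edge_sqdiff f e \<le> m1 e"
        using m1_nonneg e by (simp add: mult_left_le)
      ultimately show ?thesis
        by linarith
    qed
    then have "edge_energy V E m1 f \<le> (\<Sum>e\<in>E. Dsq E d / (d e)\<^sup>2)"
      unfolding edge_energy_eq_sum_edges[OF sg] by (rule sum_mono)
    then have "edge_energy V E m1 f / weighted_variance V m0 f
        \<le> (\<Sum>e\<in>E. Dsq E d / (d e)\<^sup>2) / weighted_variance V m0 f"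
      using weighted_variance_pos[OF simple_graph_finite[OF sg] m0 uv(1,2) fuv]
      by (simp add: divide_right_mono)
    then show ?thesis
      using lambda1_le_rayleigh[OF m0 m1_nonneg uv(1,2) fuv] by linarith
  qed
  then show ?thesis
    by (intro bdd_aboveI) blast
qed

lemma lambda1_le_sigma_inv:
  assumes "simple_graph V E" "\<forall>u\<in>V. m0 u > 0" "\<forall>e\<in>E. d e > 0"
    and "u \<in> V" "v \<in> V" "u \<noteq> v" "admissible_edge_weight V E d m1"
  shows "lambda1 V E m0 m1 \<le> sigma_inv V E m0 d"
  unfolding sigma_inv_def using assms lambda1_bdd_above by (intro cSup_upper) blast+

lemma sigma_inv_le:
  assumes "connected_graph V E" "\<And>m1. admissible_edge_weight V E d m1 \<Longrightarrow> lambda1 V E m0 m1 \<le> c"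
  shows "sigma_inv V E m0 d \<le> c"
  unfolding sigma_inv_def using assms admissible_edge_weight_one by (intro cSup_least) blast+

lemma sigma_inv_pos:
  assumes "simple_graph V E" "connected_graph V E" "\<forall>u\<in>V. m0 u > 0" "\<forall>e\<in>E. d e > 0"
    and "u \<in> V" "v \<in> V" "u \<noteq> v"
  shows "sigma_inv V E m0 d > 0"
  using lambda1_le_sigma_inv[OF assms(1,3,4,5-7) admissible_edge_weight_one[OF assms(2)]]
    lambda1_unit_weight_pos[OF assms(1-3,5-7)]
  by linarith

lemma connected_support_if_poincare:
  assumes sg: "simple_graph V E" and V: "V \<noteq> {}" and m0: "\<forall>u\<in>V. m0 u > 0"
    and m1: "\<forall>e\<in>E. m1 e \<ge> 0" and c: "c > 0"
    and poincare: "\<And>f. c * weighted_variance V m0 f \<le> edge_energy V E m1 f"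
  shows "connected_graph V {e\<in>E. m1 e > 0}"
proof (rule ccontr)
  define R where "R = {(x, y). {x, y} \<in> {e\<in>E. m1 e > 0}}"
  assume "\<not> connected_graph V {e\<in>E. m1 e > 0}"
  then obtain u v where uv: "u \<in> V" "v \<in> V" "(u, v) \<notin> R\<^sup>*"
    using V unfolding connected_graph_def R_def by blast
  define f where "f x = (if (u, x) \<in> R\<^sup>* then 1 else 0 :: real)" for x
  have no_jump: "m1 {x, y} * (f x - f y)\<^sup>2 = 0" if "{x, y} \<in> E" for x y
  proof (cases "m1 {x, y} > 0")
    case True
    then have "(x, y) \<in> R" "(y, x) \<in> R"
      using that unfolding R_def by (auto simp: insert_commute)
    then have "f x = f y"
      unfolding f_def by (meson rtrancl.rtrancl_into_rtrancl)
    then show ?thesis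
      by simp
  qed (use m1 that in force)
  have "edge_energy V E m1 f = 0"
    unfolding edge_energy_def using no_jump by (auto intro!: sum.neutral)
  moreover have "weighted_variance V m0 f > 0"
    using weighted_variance_pos[OF simple_graph_finite[OF sg] m0 uv(1,2)] uv unfolding f_def by simp
  ultimately show False
    using poincare[of f] c by (simp add: mult_le_0_iff)
qed

section \<open>Weak duality\<close>

lemma vnorm2_nonneg: "vnorm2 V x \<ge> 0"
  unfolding vnorm2_def by (simp add: sum_nonneg)

lemma vnorm2_le_of_vnorm_le: "vnorm V x \<le> r \<Longrightarrow> vnorm2 V x \<le> r\<^sup>2"
  unfolding vnorm_def by (metis power_mono real_sqrt_ge_zero real_sqrt_pow2 vnorm2_nonneg)

lemma sum_coordinate_variances:
  assumes "total_mass V m0 \<noteq> 0"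
  shows "(\<Sum>i\<in>I. weighted_variance V m0 (\<lambda>u. \<phi> u i))
    = (\<Sum>u\<in>V. m0 u * vnorm2 I (\<phi> u)) - total_mass V m0 * vnorm2 I (bary V m0 \<phi>)"
proof -
  have "weighted_variance V m0 (\<lambda>u. \<phi> u i)
      = (\<Sum>u\<in>V. m0 u * (\<phi> u i)\<^sup>2) - total_mass V m0 * (bary V m0 \<phi> i)\<^sup>2" for i
    using weighted_moment_eq_variance[OF assms, of "\<lambda>u. \<phi> u i" 0]
    unfolding bary_def mean_val_def by simp
  then have "(\<Sum>i\<in>I. weighted_variance V m0 (\<lambda>u. \<phi> u i))
      = (\<Sum>i\<in>I. \<Sum>u\<in>V. m0 u * (\<phi> u i)\<^sup>2) - (\<Sum>i\<in>I. total_mass V m0 * (bary V m0 \<phi> i)\<^sup>2)"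
    by (simp add: sum_subtractf)
  then show ?thesis
    unfolding vnorm2_def sum_distrib_left by (simp add: sum.swap[of _ I])
qed

lemma sum_coordinate_energies_le_Dsq:
  assumes sg: "simple_graph V E" and \<phi>: "admissible_map V E m0 d \<phi>"
    and m1: "admissible_edge_weight V E d m1"
  shows "(\<Sum>i\<in>V. edge_energy V E m1 (\<lambda>u. \<phi> u i)) \<le> Dsq E d"
proof -
  have m1_nonneg: "\<forall>e\<in>E. m1 e \<ge> 0" and m1_sum: "(\<Sum>e\<in>E. m1 e * (d e)\<^sup>2) = Dsq E d"
    using m1 unfolding admissible_edge_weight_def by blast+
  have "(\<Sum>i\<in>V. edge_energy V E m1 (\<lambda>u. \<phi> u i)) = (\<Sum>e\<in>E. m1 e * (\<Sum>i\<in>V. edge_sqdiff (\<lambda>u. \<phi> u i) e))"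
    unfolding edge_energy_eq_sum_edges[OF sg] sum_distrib_left by (rule sum.swap)
  also have "\<dots> \<le> (\<Sum>e\<in>E. m1 e * (d e)\<^sup>2)"
  proof (rule sum_mono)
    fix e assume e: "e \<in> E"
    then obtain a b where ab: "e = {a, b}"
      using simple_graph_edgeE[OF sg] by metis
    have "vnorm V (\<lambda>i. \<phi> a i - \<phi> b i) \<le> d e"
      using \<phi> e unfolding admissible_map_def ab by blast
    then have "(\<Sum>i\<in>V. edge_sqdiff (\<lambda>u. \<phi> u i) e) \<le> (d e)\<^sup>2"
      using vnorm2_le_of_vnorm_le unfolding ab vnorm2_def by simp
    then show "m1 e * (\<Sum>i\<in>V. edge_sqdiff (\<lambda>u. \<phi> u i) e) \<le> m1 e * (d e)\<^sup>2"
      using m1_nonneg e by (simp add: mult_left_mono)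
  qed
  finally show ?thesis
    unfolding m1_sum .
qed

lemma lambda1_mul_le_Dsq:
  assumes sg: "simple_graph V E" and m0: "\<forall>u\<in>V. m0 u > 0" and V: "V \<noteq> {}"
    and \<phi>: "admissible_map V E m0 d \<phi>" and m1: "admissible_edge_weight V E d m1"
  shows "lambda1 V E m0 m1 * (total_mass V m0 - total_mass V m0 * vnorm2 V (bary V m0 \<phi>)) \<le> Dsq E d"
proof -
  have fV: "finite V"
    using simple_graph_finite[OF sg] .
  have M: "total_mass V m0 \<noteq> 0"
    using total_mass_pos[OF fV V m0] by simp
  have m1_nonneg: "\<forall>e\<in>E. m1 e \<ge> 0"
    using m1 unfolding admissible_edge_weight_def by blast
  have "lambda1 V E m0 m1 * (total_mass V m0 - total_mass V m0 * vnorm2 V (bary V m0 \<phi>))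
      = (\<Sum>i\<in>V. lambda1 V E m0 m1 * weighted_variance V m0 (\<lambda>u. \<phi> u i))"
    using \<phi> unfolding sum_distrib_left[symmetric] sum_coordinate_variances[OF M] admissible_map_def
    by simp
  also have "\<dots> \<le> (\<Sum>i\<in>V. edge_energy V E m1 (\<lambda>u. \<phi> u i))"
    by (intro sum_mono lambda1_mul_variance_le_energy[OF fV m0 m1_nonneg])
  also have "\<dots> \<le> Dsq E d"
    using sum_coordinate_energies_le_Dsq[OF sg \<phi> m1] .
  finally show ?thesis .
qed

lemma delta_inv_le:
  "admissible_map V E m0 d \<phi> \<Longrightarrow> delta_inv V E m0 d \<le> vnorm2 V (bary V m0 \<phi>)"
  unfolding delta_inv_def
  by (rule cInf_lower) (auto intro!: bdd_belowI[of _ 0] vnorm2_nonneg)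

lemma admissible_map_unit_vector:
  assumes "finite V" "w \<in> V" "\<forall>e\<in>E. d e \<ge> 0"
  shows "admissible_map V E m0 d (\<lambda>_ i. if i = w then 1 else 0)"
proof -
  have "vnorm2 V (\<lambda>i. if i = w then 1 else 0) = 1"
    using assms(1,2) unfolding vnorm2_def by (simp add: if_distrib[of "\<lambda>x. x\<^sup>2"] cong: if_cong)
  then show ?thesis
    using assms(3) unfolding admissible_map_def total_mass_def vnorm_def vnorm2_def by auto
qed

lemma bary_norm_lower_bound:
  assumes sg: "simple_graph V E" and cg: "connected_graph V E" and m0: "\<forall>u\<in>V. m0 u > 0"
    and d: "\<forall>e\<in>E. d e > 0" and uv: "u \<in> V" "v \<in> V" "u \<noteq> v"
    and \<phi>: "admissible_map V E m0 d \<phi>"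
  shows "1 - Dsq E d / total_mass V m0 / sigma_inv V E m0 d \<le> vnorm2 V (bary V m0 \<phi>)"
proof -
  define M D \<sigma> x where "M = total_mass V m0" and "D = Dsq E d" and "\<sigma> = sigma_inv V E m0 d"
    and "x = vnorm2 V (bary V m0 \<phi>)"
  have M: "M > 0"
    using total_mass_pos[OF simple_graph_finite[OF sg] _ m0] uv M_def by auto
  have \<sigma>: "\<sigma> > 0"
    using sigma_inv_pos[OF sg cg m0 d uv] \<sigma>_def by simp
  have D: "D > 0"
    using Dsq_pos[OF sg connected_graph_edges_nonempty[OF cg uv] d] D_def by simp
  have "1 - D / M / \<sigma> \<le> x"
  proof (cases "x < 1")
    case True
    have "\<sigma> \<le> D / (M - M * x)"
      unfolding \<sigma>_def
    proof (rule sigma_inv_le[OF cg])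
      fix m1 assume "admissible_edge_weight V E d m1"
      then show "lambda1 V E m0 m1 \<le> D / (M - M * x)"
        using lambda1_mul_le_Dsq[OF sg m0 _ \<phi>] uv True M
        unfolding M_def D_def x_def by (auto simp: pos_le_divide_eq)
    qed
    then show ?thesis
      using True M \<sigma> by (simp add: field_simps)
  next
    case False
    have "D / M / \<sigma> \<ge> 0"
      using D M \<sigma> by simp
    then show ?thesis
      using False by linarith
  qed
  then show ?thesis
    unfolding M_def D_def \<sigma>_def x_def .
qed

lemma delta_inv_lower_bound:
  assumes sg: "simple_graph V E" and cg: "connected_graph V E" and m0: "\<forall>u\<in>V. m0 u > 0"
    and d: "\<forall>e\<in>E. d e > 0" and uv: "u \<in> V" "v \<in> V" "u \<noteq> v"
  shows "max (1 - Dsq E d / total_mass V m0 / sigma_inv V E m0 d) 0 \<le> delta_inv V E m0 d"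
  unfolding delta_inv_def
proof (rule cInf_greatest)
  have "admissible_map V E m0 d (\<lambda>_ i. if i = u then 1 else 0)"
    using admissible_map_unit_vector[OF simple_graph_finite[OF sg] uv(1)] d by (simp add: less_imp_le)
  then show "{vnorm2 V (bary V m0 \<phi>) | \<phi>. admissible_map V E m0 d \<phi>} \<noteq> {}"
    by blast
next
  fix x assume "x \<in> {vnorm2 V (bary V m0 \<phi>) | \<phi>. admissible_map V E m0 d \<phi>}"
  then show "max (1 - Dsq E d / total_mass V m0 / sigma_inv V E m0 d) 0 \<le> x"
    using bary_norm_lower_bound[OF assms] vnorm2_nonneg by auto
qed

lemma simple_graph_singleton_edges: "simple_graph {w} E \<Longrightarrow> E = {}"
  by (metis all_not_in_conv simple_graph_edgeE singletonD)

lemma delta_inv_singleton: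
  assumes sg: "simple_graph {w} E" and m0: "m0 w > 0"
  shows "delta_inv {w} E m0 d = 1"
proof -
  have bary_norm: "vnorm2 {w} (bary {w} m0 \<phi>) = 1" if \<phi>: "admissible_map {w} E m0 d \<phi>" for \<phi>
  proof -
    have "bary {w} m0 \<phi> = \<phi> w"
      using m0 unfolding bary_def total_mass_def by simp
    moreover have "m0 w * vnorm2 {w} (\<phi> w) = m0 w"
      using \<phi> unfolding admissible_map_def total_mass_def by simp
    ultimately show ?thesis
      using m0 by simp
  qed
  have unit: "admissible_map {w} E m0 d (\<lambda>_ i. if i = w then 1 else 0)"
    using admissible_map_unit_vector[of "{w}" w E d m0] simple_graph_singleton_edges[OF sg] by simp
  then have "delta_inv {w} E m0 d \<le> 1"
    using delta_inv_le bary_norm by metis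
  moreover have "1 \<le> delta_inv {w} E m0 d"
    unfolding delta_inv_def using bary_norm unit by (intro cInf_greatest) auto
  ultimately show ?thesis
    by simp
qed

section \<open>A theorem of the alternative for convex-like families\<close>

definition convex_like_on :: "'i set \<Rightarrow> 'c set \<Rightarrow> ('i \<Rightarrow> 'c \<Rightarrow> real) \<Rightarrow> bool" where
  "convex_like_on I C g \<longleftrightarrow> (\<forall>x\<in>C. \<forall>z\<in>C. \<forall>s\<in>{0..1}.
     \<exists>w\<in>C. \<forall>i\<in>I. g i w \<le> s * g i x + (1 - s) * g i z)"

lemma convex_like_onD:
  assumes "convex_like_on I C g" "x \<in> C" "z \<in> C" "0 \<le> s" "s \<le> 1"
  shows "\<exists>w\<in>C. \<forall>i\<in>I. g i w \<le> s * g i x + (1 - s) * g i z"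
  using assms unfolding convex_like_on_def by simp

lemma convex_combination_neg:
  fixes a b s :: real
  assumes "a < 0" "b < 0" "0 \<le> s" "s \<le> 1"
  shows "s * a + (1 - s) * b < 0"
proof -
  have "s * a + (1 - s) * b \<le> s * max a b + (1 - s) * max a b"
    using assms(3,4) by (intro add_mono mult_left_mono) auto
  then show ?thesis
    using assms(1,2) by (simp add: algebra_simps)
qed

lemma convex_like_pair_ratio_le:
  fixes h g :: "'c \<Rightarrow> real"
  assumes mix: "\<And>x z s. x \<in> C \<Longrightarrow> z \<in> C \<Longrightarrow> 0 \<le> s \<Longrightarrow> s \<le> 1 \<Longrightarrow>
      \<exists>w\<in>C. h w \<le> s * h x + (1 - s) * h z \<and> g w \<le> s * g x + (1 - s) * g z"
    and cover: "\<forall>x\<in>C. h x \<ge> 0 \<or> g x \<ge> 0"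
    and x: "x \<in> C" "h x < 0" and z: "z \<in> C" "g z < 0"
  shows "g z / (g z - h z) \<le> g x / (g x - h x)"
proof (rule ccontr)
  define a b c e where "a = - h x" and "b = g x" and "c = h z" and "e = - g z"
  have pos: "a > 0" "b \<ge> 0" "c \<ge> 0" "e > 0"
    using x z cover unfolding a_def b_def c_def e_def by force+
  have "g x / (g x - h x) = b / (b + a)"
    unfolding a_def b_def by simp
  moreover have "g z / (g z - h z) = e / (e + c)"
    unfolding c_def e_def using minus_divide_divide[of "g z" "g z - h z"] by simp
  moreover assume "\<not> ?thesis"
  ultimately have "b / (b + a) < e / (e + c)"
    by simp
  then have "b * c < e * a"
    using pos by (simp add: divide_simps) argo
  then have "c / (c + a) < e / (b + e)"
    using pos by (simp add: divide_simps) argo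
  then obtain s where s: "c / (c + a) < s" "s < e / (b + e)"
    using dense by blast
  moreover have "0 \<le> c / (c + a)" "e / (b + e) \<le> 1"
    using pos by (simp_all add: divide_simps)
  ultimately have s01: "0 \<le> s" "s \<le> 1"
    by linarith+
  obtain w where "w \<in> C" "h w \<le> s * h x + (1 - s) * h z" "g w \<le> s * g x + (1 - s) * g z"
    using mix[OF x(1) z(1) s01] by blast
  moreover have "c < s * (c + a)" "s * (b + e) < e"
    using s pos by (simp_all add: divide_simps mult.commute)
  ultimately have "h w < 0" "g w < 0"
    unfolding a_def b_def c_def e_def by (simp_all add: algebra_simps)
  then show False
    using cover \<open>w \<in> C\<close> by force
qed

lemma convex_like_pair_nonneg_combination:
  fixes h g :: "'c \<Rightarrow> real"
  assumes mix: "\<And>x z s. x \<in> C \<Longrightarrow> z \<in> C \<Longrightarrow> 0 \<le> s \<Longrightarrow> s \<le> 1 \<Longrightarrow>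
      \<exists>w\<in>C. h w \<le> s * h x + (1 - s) * h z \<and> g w \<le> s * g x + (1 - s) * g z"
    and cover: "\<forall>x\<in>C. h x \<ge> 0 \<or> g x \<ge> 0"
  shows "\<exists>t\<in>{0..1}. \<forall>x\<in>C. t * h x + (1 - t) * g x \<ge> 0"
proof (cases "\<forall>x\<in>C. g x \<ge> 0")
  case True
  then show ?thesis
    by force
next
  case False
  define B where "B = {x\<in>C. g x < 0}"
  define r where "r x = g x / (g x - h x)" for x
  have B: "B \<noteq> {}"
    using False B_def by auto
  have rB: "0 < r z \<and> r z \<le> 1" if "z \<in> B" for z
    using that cover unfolding B_def r_def by (force simp: divide_simps)
  have bdd: "bdd_above (r ` B)"
    using rB by (auto intro!: bdd_aboveI[of _ 1])
  define t where "t = Sup (r ` B)"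
  obtain z where "z \<in> B"
    using B by blast
  then have t: "0 \<le> t" "t \<le> 1"
    using B rB cSup_upper[OF imageI bdd, of z] unfolding t_def by (force intro: cSup_least)+
  have "t * h x + (1 - t) * g x \<ge> 0" if x: "x \<in> C" for x
  proof (cases "g x < 0")
    case True
    then have "r x \<le> t" "h x \<ge> 0"
      using x bdd cover unfolding t_def B_def by (auto intro: cSup_upper)
    then show ?thesis
      using True unfolding r_def by (simp add: field_simps)
  next
    case False
    show ?thesis
    proof (cases "h x < 0")
      case True
      have "t \<le> r x"
        unfolding t_def using B convex_like_pair_ratio_le[OF mix cover x True]
        by (auto simp: B_def r_def intro!: cSup_least)
      then show ?thesis
        using False True unfolding r_def by (simp add: field_simps)
    qed (use False t in simp)
  qed
  then show ?thesis
    using t by (intro bexI[of _ t]) auto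
qed

lemma convex_like_on_negative_part:
  assumes "convex_like_on (insert k I) C g"
  shows "convex_like_on I {x\<in>C. g k x < 0} g"
  unfolding convex_like_on_def
proof (intro ballI)
  fix x z and s :: real
  assume xz: "x \<in> {x\<in>C. g k x < 0}" "z \<in> {x\<in>C. g k x < 0}" and s: "s \<in> {0..1}"
  then obtain w where w: "w \<in> C" "\<forall>i\<in>insert k I. g i w \<le> s * g i x + (1 - s) * g i z"
    using convex_like_onD[OF assms, of x z s] by auto
  then have "g k w < 0"
    using convex_combination_neg[of "g k x" "g k z" s] xz s by force
  then show "\<exists>w\<in>{x\<in>C. g k x < 0}. \<forall>i\<in>I. g i w \<le> s * g i x + (1 - s) * g i z"
    using w by blast
qed

lemma convex_like_on_combination_pair:
  assumes "convex_like_on (insert k I) C g" "\<forall>i\<in>I. y i \<ge> 0"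
    and "x \<in> C" "z \<in> C" "0 \<le> s" "s \<le> 1"
  shows "\<exists>w\<in>C. (\<Sum>i\<in>I. y i * g i w) \<le> s * (\<Sum>i\<in>I. y i * g i x) + (1 - s) * (\<Sum>i\<in>I. y i * g i z)
    \<and> g k w \<le> s * g k x + (1 - s) * g k z"
proof -
  obtain w where w: "w \<in> C" "\<forall>i\<in>insert k I. g i w \<le> s * g i x + (1 - s) * g i z"
    using convex_like_onD[OF assms(1,3-6)] by blast
  have "(\<Sum>i\<in>I. y i * g i w) \<le> (\<Sum>i\<in>I. y i * (s * g i x + (1 - s) * g i z))"
    using w(2) assms(2) by (intro sum_mono mult_left_mono) auto
  also have "\<dots> = s * (\<Sum>i\<in>I. y i * g i x) + (1 - s) * (\<Sum>i\<in>I. y i * g i z)"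
    unfolding sum_distrib_left sum.distrib[symmetric] by (intro sum.cong) (auto simp: algebra_simps)
  finally show ?thesis
    using w by auto
qed

text \<open>Induction on \<open>I\<close>: the functions of \<open>I\<close> are combined on the set where \<open>g k\<close> is negative,
  and the result is played off against \<open>g k\<close> by the two-function case.\<close>
lemma convex_like_nonneg_combination:
  fixes g :: "'i \<Rightarrow> 'c \<Rightarrow> real"
  assumes "finite I" "I \<noteq> {}" "convex_like_on I C g" "\<forall>x\<in>C. \<exists>i\<in>I. g i x \<ge> 0"
  shows "\<exists>y. (\<forall>i\<in>I. y i \<ge> 0) \<and> sum y I = 1 \<and> (\<forall>x\<in>C. (\<Sum>i\<in>I. y i * g i x) \<ge> 0)"
  using assms
proof (induction I arbitrary: C rule: finite_ne_induct)
  case (singleton k)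
  then show ?case
    by (intro exI[of _ "\<lambda>_. 1"]) auto
next
  case (insert k I)
  have "\<forall>x\<in>{x\<in>C. g k x < 0}. \<exists>i\<in>I. g i x \<ge> 0"
    using insert.prems(2) by force
  then obtain y' where y': "\<forall>i\<in>I. y' i \<ge> 0" "sum y' I = 1"
    "\<forall>x\<in>{x\<in>C. g k x < 0}. (\<Sum>i\<in>I. y' i * g i x) \<ge> 0"
    using insert.IH[OF convex_like_on_negative_part[OF insert.prems(1)]] by blast
  have "\<forall>x\<in>C. (\<Sum>i\<in>I. y' i * g i x) \<ge> 0 \<or> g k x \<ge> 0"
    using y'(3) by force
  then obtain t where t: "t \<in> {0..1}" "\<forall>x\<in>C. t * (\<Sum>i\<in>I. y' i * g i x) + (1 - t) * g k x \<ge> 0"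
    using convex_like_pair_nonneg_combination[of C "\<lambda>x. \<Sum>i\<in>I. y' i * g i x" "g k"]
      convex_like_on_combination_pair[OF insert.prems(1) y'(1)] by blast
  define y where "y i = (if i = k then 1 - t else t * y' i)" for i
  have y_I: "(\<Sum>i\<in>I. y i * G i) = t * (\<Sum>i\<in>I. y' i * G i)" for G :: "'i \<Rightarrow> real"
    unfolding y_def sum_distrib_left using insert.hyps
    by (intro sum.cong) (auto simp: mult.assoc)
  have "sum y (insert k I) = 1"
    using y_I[of "\<lambda>_. 1"] y'(2) insert.hyps by (simp add: y_def)
  moreover have "\<forall>i\<in>insert k I. y i \<ge> 0"
    using t y'(1) y_def by auto
  moreover have "(\<Sum>i\<in>insert k I. y i * g i x) \<ge> 0" if "x \<in> C" for x
    using y_I[of "\<lambda>i. g i x"] insert.hyps t(2) that by (simp add: y_def add.commute)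
  ultimately show ?case
    by blast
qed

section \<open>Centered families with few members\<close>

definition gram :: "'j set \<Rightarrow> ('j \<Rightarrow> 'a \<Rightarrow> real) \<Rightarrow> 'a \<Rightarrow> 'a \<Rightarrow> real" where
  "gram J F u v = (\<Sum>j\<in>J. F j u * F j v)"

definition centered_family :: "'a set \<Rightarrow> ('a \<Rightarrow> real) \<Rightarrow> 'j set \<Rightarrow> ('j \<Rightarrow> 'a \<Rightarrow> real) \<Rightarrow> bool" where
  "centered_family V m0 J F \<longleftrightarrow> (\<forall>j\<in>J. (\<Sum>u\<in>V. m0 u * F j u) = 0)"

lemma sum_sq_diff_eq_gram:
  "(\<Sum>j\<in>J. (F j u - F j v)\<^sup>2) = gram J F u u + gram J F v v - 2 * gram J F u v"
  unfolding gram_def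
  by (simp add: power2_eq_square algebra_simps sum.distrib sum_subtractf sum_distrib_left)

lemma sum_variance_eq_gram:
  assumes "total_mass V m0 \<noteq> 0" "centered_family V m0 J F"
  shows "(\<Sum>j\<in>J. weighted_variance V m0 (F j)) = (\<Sum>u\<in>V. m0 u * gram J F u u)"
  using assms unfolding centered_family_def gram_def
  by (simp add: weighted_variance_centered sum_distrib_left power2_eq_square sum.swap[of _ J])

text \<open>Undoing one step of Gaussian elimination with pivot \<open>F q w \<noteq> 0\<close>.\<close>
lemma dependent_member_back_substitution:
  fixes F :: "'j \<Rightarrow> 'a \<Rightarrow> real"
  assumes J: "finite J" and q: "q \<in> J" "F q w \<noteq> 0" and p: "p \<in> J - {q}"
    and a: "\<forall>u\<in>W. F p u - F p w / F q w * F q u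
      = (\<Sum>j\<in>J - {q} - {p}. a j * (F j u - F j w / F q w * F q u))"
  shows "\<exists>a'. \<forall>u\<in>insert w W. F p u = (\<Sum>j\<in>J - {p}. a' j * F j u)"
proof -
  define c where "c = (F p w - (\<Sum>j\<in>J - {q} - {p}. a j * F j w)) / F q w"
  define a' where "a' j = (if j = q then c else a j)" for j
  have Jp: "J - {p} = insert q (J - {q} - {p})"
    using p q(1) by auto
  have a'_sum: "(\<Sum>j\<in>J - {p}. a' j * F j u) = c * F q u + (\<Sum>j\<in>J - {q} - {p}. a j * F j u)" for u
    unfolding Jp using J by (simp add: a'_def)
  have "F p u = (\<Sum>j\<in>J - {p}. a' j * F j u)" if u: "u \<in> insert w W" for u
  proof (cases "u = w")
    case True
    then show ?thesis
      unfolding a'_sum c_def using q(2) by simp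
  next
    case False
    then have "F p u - F p w / F q w * F q u
        = (\<Sum>j\<in>J - {q} - {p}. a j * F j u) - (\<Sum>j\<in>J - {q} - {p}. a j * F j w) / F q w * F q u"
      using a u by (simp add: algebra_simps sum_subtractf sum_distrib_left sum_divide_distrib)
    then show ?thesis
      unfolding a'_sum c_def by (simp add: algebra_simps diff_divide_distrib)
  qed
  then show ?thesis
    by blast
qed

lemma exists_dependent_member:
  fixes F :: "'j \<Rightarrow> 'a \<Rightarrow> real"
  assumes "finite W" "finite J" "card W < card J"
  shows "\<exists>p\<in>J. \<exists>a. \<forall>u\<in>W. F p u = (\<Sum>j\<in>J - {p}. a j * F j u)"
  using assms
proof (induction W arbitrary: J F rule: finite_induct)
  case empty
  then have "J \<noteq> {}"
    by auto
  then show ?case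
    by blast
next
  case (insert w W)
  show ?case
  proof (cases "\<forall>j\<in>J. F j w = 0")
    case True
    obtain p a where "p \<in> J" "\<forall>u\<in>W. F p u = (\<Sum>j\<in>J - {p}. a j * F j u)"
      using insert.IH[of J F] insert.prems insert.hyps by auto
    then show ?thesis
      using True by auto
  next
    case False
    then obtain q where q: "q \<in> J" "F q w \<noteq> 0"
      by blast
    have "card W < card (J - {q})"
      using insert.prems insert.hyps q(1) by (simp add: card_Diff_singleton)
    then obtain p a where p: "p \<in> J - {q}" and "\<forall>u\<in>W. F p u - F p w / F q w * F q u
        = (\<Sum>j\<in>J - {q} - {p}. a j * (F j u - F j w / F q w * F q u))"
      using insert.IH[of "J - {q}" "\<lambda>j u. F j u - F j w / F q w * F q u"] insert.prems(1) by blast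
    then show ?thesis
      using dependent_member_back_substitution[of J q F w p W a] insert.prems(1) q p by blast
  qed
qed

lemma centered_family_dependent_member:
  assumes "finite V" "w \<in> V" "m0 w \<noteq> 0" "finite J" "centered_family V m0 J F" "card V \<le> card J"
  shows "\<exists>p\<in>J. \<exists>a. \<forall>u\<in>V. F p u = (\<Sum>j\<in>J - {p}. a j * F j u)"
proof -
  have "card (V - {w}) < card J"
    using card_Diff1_less[OF assms(1,2)] assms(6) by linarith
  then obtain p a where p: "p \<in> J" and a: "\<forall>u\<in>V - {w}. F p u = (\<Sum>j\<in>J - {p}. a j * F j u)"
    using exists_dependent_member[of "V - {w}" J F] assms(1,4) by blast
  text \<open>Centering determines the value at \<open>w\<close> from the values on \<open>V - {w}\<close>.\<close>
  have at_w: "m0 w * F j w = - (\<Sum>u\<in>V - {w}. m0 u * F j u)" if "j \<in> J" for j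
    using assms(5) that sum.remove[OF assms(1,2), of "\<lambda>u. m0 u * F j u"]
    unfolding centered_family_def by simp
  have "m0 w * (\<Sum>j\<in>J - {p}. a j * F j w) = - (\<Sum>u\<in>V - {w}. m0 u * (\<Sum>j\<in>J - {p}. a j * F j u))"
    using at_w by (simp add: sum_distrib_left sum_negf algebra_simps sum.swap[of _ "J - {p}"])
  also have "\<dots> = m0 w * F p w"
    using a at_w[OF p] by simp
  finally have "F p w = (\<Sum>j\<in>J - {p}. a j * F j w)"
    using assms(3) by simp
  then show ?thesis
    using a p by (metis insertE insert_Diff assms(2))
qed

text \<open>With \<open>F p = \<Sum> a j * F j\<close>, the choice \<open>2 * \<beta> + \<beta>\<^sup>2 * (\<Sum> (a j)\<^sup>2) = 1\<close> makes the correction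
  terms of \<open>F j + \<beta> * a j * F p\<close> add up to exactly \<open>F p u * F p v\<close>.\<close>
lemma gram_drop_dependent_member:
  assumes "finite J" "p \<in> J" "\<forall>u\<in>V. F p u = (\<Sum>j\<in>J - {p}. a j * F j u)"
  defines "\<beta> \<equiv> 1 / (1 + sqrt (1 + (\<Sum>j\<in>J - {p}. (a j)\<^sup>2)))"
  shows "\<forall>u\<in>V. \<forall>v\<in>V. gram (J - {p}) (\<lambda>j u. F j u + \<beta> * a j * F p u) u v = gram J F u v"
proof (intro ballI)
  fix u v assume uv: "u \<in> V" "v \<in> V"
  define A where "A = (\<Sum>j\<in>J - {p}. (a j)\<^sup>2)"
  define r where "r = sqrt (1 + A)"
  have r: "r \<ge> 0" "r\<^sup>2 = 1 + A"
    unfolding r_def A_def by (simp_all add: sum_nonneg)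
  have \<beta>: "2 * \<beta> + \<beta>\<^sup>2 * A = 1"
  proof -
    have \<beta>_r: "\<beta> = 1 / (1 + r)"
      unfolding \<beta>_def r_def A_def ..
    have \<beta>_inv: "\<beta> * (1 + r) = 1"
      unfolding \<beta>_r using r(1) by simp
    have "2 * \<beta> + \<beta>\<^sup>2 * A = 2 * \<beta> + \<beta>\<^sup>2 * (r\<^sup>2 - 1)"
      using r(2) by simp
    also have "\<dots> = 2 * \<beta> + (\<beta> * (1 + r)) * \<beta> * (r - 1)"
      by (simp add: power2_eq_square algebra_simps)
    also have "\<dots> = 2 * \<beta> + \<beta> * (r - 1)"
      using \<beta>_inv by simp
    also have "\<dots> = \<beta> * (1 + r)"
      by (simp add: algebra_simps)
    finally show ?thesis
      using \<beta>_inv by simp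
  qed
  have "gram (J - {p}) (\<lambda>j u. F j u + \<beta> * a j * F p u) u v
      = (\<Sum>j\<in>J - {p}. F j u * F j v + \<beta> * F p v * (a j * F j u)
          + \<beta> * F p u * (a j * F j v) + \<beta>\<^sup>2 * F p u * F p v * (a j)\<^sup>2)"
    unfolding gram_def by (rule sum.cong[OF refl]) (simp add: algebra_simps power2_eq_square)
  also have "\<dots> = gram (J - {p}) F u v + (2 * \<beta> + \<beta>\<^sup>2 * A) * F p u * F p v"
    using assms(3) uv unfolding gram_def A_def sum.distrib sum_distrib_left[symmetric]
    by (simp add: algebra_simps)
  also have "\<dots> = gram J F u v"
    using \<beta> sum.remove[OF assms(1,2), of "\<lambda>j. F j u * F j v"] unfolding gram_def by simp
  finally show "gram (J - {p}) (\<lambda>j u. F j u + \<beta> * a j * F p u) u v = gram J F u v" .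
qed

lemma centered_family_reduce:
  fixes F :: "'j \<Rightarrow> 'a \<Rightarrow> real"
  assumes V: "finite V" "w \<in> V" "m0 w \<noteq> 0"
  shows "finite J \<Longrightarrow> centered_family V m0 J F \<Longrightarrow> \<exists>J' \<subseteq> J. \<exists>G. card J' < card V \<and>
    centered_family V m0 J' G \<and> (\<forall>u\<in>V. \<forall>v\<in>V. gram J' G u v = gram J F u v)"
proof (induction "card J" arbitrary: J F rule: less_induct)
  case less
  show ?case
  proof (cases "card J < card V")
    case True
    then show ?thesis
      using less.prems by blast
  next
    case False
    then obtain p a where p: "p \<in> J" and a: "\<forall>u\<in>V. F p u = (\<Sum>j\<in>J - {p}. a j * F j u)"
      using centered_family_dependent_member[OF V less.prems] by force
    define \<beta> where "\<beta> = 1 / (1 + sqrt (1 + (\<Sum>j\<in>J - {p}. (a j)\<^sup>2)))"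
    define G where "G j u = F j u + \<beta> * a j * F p u" for j u
    have "centered_family V m0 (J - {p}) G"
      using less.prems(2) p unfolding centered_family_def G_def
      by (simp add: sum.distrib sum_distrib_left algebra_simps flip: sum_distrib_left)
    moreover have "card (J - {p}) < card J"
      using card_Diff1_less[OF less.prems(1) p] .
    ultimately obtain J' G' where "J' \<subseteq> J - {p}" "card J' < card V" "centered_family V m0 J' G'"
      "\<forall>u\<in>V. \<forall>v\<in>V. gram J' G' u v = gram (J - {p}) G u v"
      using less.hyps[of "J - {p}" G] less.prems(1) by blast
    moreover have "\<forall>u\<in>V. \<forall>v\<in>V. gram (J - {p}) G u v = gram J F u v"
      using gram_drop_dependent_member[OF less.prems(1) p a] unfolding G_def \<beta>_def .
    ultimately show ?thesis
      by (metis Diff_subset order_trans)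
  qed
qed

lemma centered_family_subtract_mean:
  assumes "total_mass V m0 \<noteq> 0"
  shows "centered_family V m0 J (\<lambda>j u. F j u - mean_val V m0 (F j))"
  unfolding centered_family_def
proof
  fix j
  have "(\<Sum>u\<in>V. m0 u * (F j u - mean_val V m0 (F j)))
      = (\<Sum>u\<in>V. m0 u * F j u) - total_mass V m0 * mean_val V m0 (F j)"
    unfolding total_mass_def by (simp add: right_diff_distrib sum_subtractf sum_distrib_right)
  then show "(\<Sum>u\<in>V. m0 u * (F j u - mean_val V m0 (F j))) = 0"
    using sum_weighted_eq_total_mass_mean[OF assms] by simp
qed

lemma centered_family_reindex:
  assumes "inj_on \<iota> J" "centered_family V m0 J F"
  shows "centered_family V m0 (\<iota> ` J) (\<lambda>i. F (the_inv_into J \<iota> i))"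
    and "gram (\<iota> ` J) (\<lambda>i. F (the_inv_into J \<iota> i)) u v = gram J F u v"
  using assms unfolding centered_family_def gram_def
  by (auto simp: sum.reindex the_inv_into_f_f)

lemma exists_centered_family_in_complement:
  fixes F :: "'j \<Rightarrow> 'a \<Rightarrow> real"
  assumes V: "finite V" "z \<in> V" and m0: "\<forall>u\<in>V. m0 u > 0" and J: "finite J"
  shows "\<exists>J' \<subseteq> V - {z}. \<exists>G. centered_family V m0 J' G \<and>
    (\<forall>u\<in>V. \<forall>v\<in>V. (\<Sum>j\<in>J'. (G j u - G j v)\<^sup>2) = (\<Sum>j\<in>J. (F j u - F j v)\<^sup>2)) \<and>
    (\<Sum>j\<in>J'. weighted_variance V m0 (G j)) = (\<Sum>j\<in>J. weighted_variance V m0 (F j))"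
proof -
  have "total_mass V m0 > 0"
    using total_mass_pos[OF V(1) _ m0] V(2) by blast
  then have M: "total_mass V m0 \<noteq> 0"
    by simp
  define F1 where "F1 j u = F j u - mean_val V m0 (F j)" for j u
  have F1: "centered_family V m0 J F1"
    unfolding F1_def using centered_family_subtract_mean[OF M] .
  obtain J1 G1 where J1: "J1 \<subseteq> J" "card J1 < card V" and G1: "centered_family V m0 J1 G1"
    and gram1: "\<forall>u\<in>V. \<forall>v\<in>V. gram J1 G1 u v = gram J F1 u v"
    using centered_family_reduce[OF V _ J F1] m0 V(2) by force
  have "card J1 \<le> card (V - {z})"
    using J1(2) V by simp
  then obtain \<iota> where \<iota>: "\<iota> ` J1 \<subseteq> V - {z}" "inj_on \<iota> J1"
    using card_le_inj[of J1 "V - {z}"] finite_subset[OF J1(1) J] V(1) by blast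
  define G where "G i = G1 (the_inv_into J1 \<iota> i)" for i
  have G: "centered_family V m0 (\<iota> ` J1) G"
    unfolding G_def using centered_family_reindex(1)[OF \<iota>(2) G1] .
  have gram: "gram (\<iota> ` J1) G u v = gram J F1 u v" if "u \<in> V" "v \<in> V" for u v
    unfolding G_def centered_family_reindex(2)[OF \<iota>(2) G1] using gram1 that by blast
  have "(\<Sum>j\<in>\<iota> ` J1. (G j u - G j v)\<^sup>2) = (\<Sum>j\<in>J. (F j u - F j v)\<^sup>2)" if "u \<in> V" "v \<in> V" for u v
  proof -
    have "(\<Sum>j\<in>\<iota> ` J1. (G j u - G j v)\<^sup>2) = (\<Sum>j\<in>J. (F1 j u - F1 j v)\<^sup>2)"
      unfolding sum_sq_diff_eq_gram using gram that by simp
    then show ?thesis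
      unfolding F1_def by simp
  qed
  moreover have "(\<Sum>j\<in>\<iota> ` J1. weighted_variance V m0 (G j)) = (\<Sum>j\<in>J. weighted_variance V m0 (F j))"
    using sum_variance_eq_gram[OF M G] sum_variance_eq_gram[OF M F1] gram
    unfolding F1_def weighted_variance_translate[OF M] by simp
  ultimately show ?thesis
    using G \<iota>(1) by blast
qed

section \<open>Strong duality\<close>

lemma sum_list_scaled_homogeneous:
  fixes Q :: "('a \<Rightarrow> real) \<Rightarrow> real" and c :: real
  assumes "\<And>a f. Q (\<lambda>u. a * f u) = a\<^sup>2 * Q f"
  shows "(\<Sum>f\<leftarrow>map (\<lambda>f u. c * f u) Fs. Q f) = c\<^sup>2 * (\<Sum>f\<leftarrow>Fs. Q f)"
  by (induction Fs) (simp_all add: assms distrib_left)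

text \<open>Mixing two families with weights \<open>s\<close> and \<open>1 - s\<close> is concatenating them after scaling by
  \<open>sqrt s\<close> and \<open>sqrt (1 - s)\<close>.\<close>
lemma convex_like_sum_list_homogeneous:
  fixes Q :: "'i \<Rightarrow> ('a \<Rightarrow> real) \<Rightarrow> real"
  assumes "\<And>i c f. i \<in> I \<Longrightarrow> Q i (\<lambda>u. c * f u) = c\<^sup>2 * Q i f"
  shows "convex_like_on I UNIV (\<lambda>i Fs. \<Sum>f\<leftarrow>Fs. Q i f)"
  unfolding convex_like_on_def
proof (intro ballI)
  fix Fs Gs :: "('a \<Rightarrow> real) list" and s :: real
  assume "s \<in> {0..1}"
  then have "(\<Sum>f\<leftarrow>map (\<lambda>f u. sqrt s * f u) Fs @ map (\<lambda>f u. sqrt (1 - s) * f u) Gs. Q i f)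
      = s * (\<Sum>f\<leftarrow>Fs. Q i f) + (1 - s) * (\<Sum>f\<leftarrow>Gs. Q i f)" if "i \<in> I" for i
    using sum_list_scaled_homogeneous[of "Q i"] assms[OF that] by simp
  then show "\<exists>w\<in>UNIV. \<forall>i\<in>I. (\<Sum>f\<leftarrow>w. Q i f) \<le> s * (\<Sum>f\<leftarrow>Fs. Q i f) + (1 - s) * (\<Sum>f\<leftarrow>Gs. Q i f)"
    by (metis UNIV_I order_refl)
qed

lemma Dsq_le_sigma_inv_of_dual_certificate:
  assumes sg: "simple_graph V E" and cg: "connected_graph V E" and m0: "\<forall>u\<in>V. m0 u > 0"
    and d: "\<forall>e\<in>E. d e > 0" and uv: "u \<in> V" "v \<in> V" "u \<noteq> v" and S: "S > 0"
    and y: "\<forall>e\<in>E. y e \<ge> 0" "sum y E = 1"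
    and certificate: "\<And>f. weighted_variance V m0 f \<le> S * (\<Sum>e\<in>E. y e * edge_sqdiff f e / (d e)\<^sup>2)"
  shows "Dsq E d \<le> S * sigma_inv V E m0 d"
proof -
  define D where "D = Dsq E d"
  have D: "D > 0"
    using Dsq_pos[OF sg connected_graph_edges_nonempty[OF cg uv] d] D_def by simp
  define m1 where "m1 e = y e * D / (d e)\<^sup>2" for e
  have m1_nonneg: "\<forall>e\<in>E. m1 e \<ge> 0"
    unfolding m1_def using y(1) D by simp
  have poincare: "D / S * weighted_variance V m0 f \<le> edge_energy V E m1 f" for f
  proof -
    have "D / S * weighted_variance V m0 f \<le> D / S * (S * (\<Sum>e\<in>E. y e * edge_sqdiff f e / (d e)\<^sup>2))"
      using certificate[of f] D S by (intro mult_left_mono) auto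
    also have "\<dots> = edge_energy V E m1 f"
      unfolding edge_energy_eq_sum_edges[OF sg] m1_def sum_distrib_left
      using S by (intro sum.cong) auto
    finally show ?thesis .
  qed
  have "admissible_edge_weight V E d m1"
    unfolding admissible_edge_weight_def
  proof (intro conjI)
    show "connected_graph V {e \<in> E. 0 < m1 e}"
      using connected_support_if_poincare[OF sg _ m0 m1_nonneg _ poincare] uv D S by auto
    have "(\<Sum>e\<in>E. m1 e * (d e)\<^sup>2) = (\<Sum>e\<in>E. y e * D)"
      unfolding m1_def using d by (intro sum.cong) auto
    then show "(\<Sum>e\<in>E. m1 e * (d e)\<^sup>2) = Dsq E d"
      using y(2) unfolding D_def by (simp add: sum_distrib_right[symmetric])
  qed (use m1_nonneg in blast)
  then have "D / S \<le> sigma_inv V E m0 d"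
    using le_lambda1[OF simple_graph_finite[OF sg] m0 uv, of "D / S" E m1] poincare
      lambda1_le_sigma_inv[OF sg m0 d uv] by force
  then show ?thesis
    using S unfolding D_def by (simp add: pos_divide_le_eq mult.commute)
qed

lemma exists_family_by_rescaling:
  assumes E: "E \<noteq> {}" and d: "\<forall>e\<in>E. d e > 0" and S: "S \<ge> 0"
    and less: "\<forall>e\<in>E. S * (\<Sum>f\<leftarrow>Fs. edge_sqdiff f e) < (\<Sum>f\<leftarrow>Fs. weighted_variance V m0 f) * (d e)\<^sup>2"
  shows "\<exists>Gs. (\<forall>e\<in>E. (\<Sum>f\<leftarrow>Gs. edge_sqdiff f e) \<le> (d e)\<^sup>2) \<and>
    (\<Sum>f\<leftarrow>Gs. weighted_variance V m0 f) = S"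
proof -
  define Var where "Var = (\<Sum>f\<leftarrow>Fs. weighted_variance V m0 f)"
  obtain e0 where e0: "e0 \<in> E"
    using E by blast
  have "0 \<le> S * (\<Sum>f\<leftarrow>Fs. edge_sqdiff f e0)"
    using S by (intro mult_nonneg_nonneg sum_list_nonneg) (auto simp: edge_sqdiff_nonneg)
  then have "0 < Var * (d e0)\<^sup>2"
    using less e0 unfolding Var_def by fastforce
  moreover have "(d e0)\<^sup>2 > 0"
    using d e0 by force
  ultimately have Var: "Var > 0"
    by (simp add: zero_less_mult_iff)
  have scale: "(sqrt (S / Var))\<^sup>2 = S / Var"
    using S Var by simp
  let ?Gs = "map (\<lambda>f u. sqrt (S / Var) * f u) Fs"
  have "(\<Sum>f\<leftarrow>?Gs. weighted_variance V m0 f) = S"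
    unfolding sum_list_scaled_homogeneous[of "weighted_variance V m0", OF weighted_variance_scale]
      scale Var_def[symmetric] using Var by simp
  moreover have "(\<Sum>f\<leftarrow>?Gs. edge_sqdiff f e) \<le> (d e)\<^sup>2" if "e \<in> E" for e
    unfolding sum_list_scaled_homogeneous[of "\<lambda>f. edge_sqdiff f e", OF edge_sqdiff_scale] scale
    using less[rule_format, OF that] Var unfolding Var_def by (simp add: field_simps)
  ultimately show ?thesis
    by blast
qed

lemma exists_family_of_sigma_lt:
  assumes sg: "simple_graph V E" and cg: "connected_graph V E" and m0: "\<forall>u\<in>V. m0 u > 0"
    and d: "\<forall>e\<in>E. d e > 0" and uv: "u \<in> V" "v \<in> V" "u \<noteq> v"
    and S: "S > 0" "S * sigma_inv V E m0 d < Dsq E d"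
  shows "\<exists>Fs. (\<forall>e\<in>E. (\<Sum>f\<leftarrow>Fs. edge_sqdiff f e) \<le> (d e)\<^sup>2) \<and>
    (\<Sum>f\<leftarrow>Fs. weighted_variance V m0 f) = S"
proof (rule ccontr)
  assume none: "\<not> ?thesis"
  have E: "E \<noteq> {}"
    using connected_graph_edges_nonempty[OF cg uv] .
  define Q where "Q e f = S * edge_sqdiff f e / (d e)\<^sup>2 - weighted_variance V m0 f" for e f
  have sum_Q: "(\<Sum>f\<leftarrow>Fs. Q e f)
      = S * (\<Sum>f\<leftarrow>Fs. edge_sqdiff f e) / (d e)\<^sup>2 - (\<Sum>f\<leftarrow>Fs. weighted_variance V m0 f)" for e Fs
    unfolding Q_def by (induction Fs) (simp_all add: algebra_simps add_divide_distrib)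
  have "convex_like_on E UNIV (\<lambda>e Fs. \<Sum>f\<leftarrow>Fs. Q e f)"
    by (rule convex_like_sum_list_homogeneous)
      (simp add: Q_def edge_sqdiff_scale weighted_variance_scale algebra_simps)
  moreover have "\<exists>e\<in>E. (\<Sum>f\<leftarrow>Fs. Q e f) \<ge> 0" for Fs
  proof (rule ccontr)
    assume neg: "\<not> (\<exists>e\<in>E. (\<Sum>f\<leftarrow>Fs. Q e f) \<ge> 0)"
    have "S * (\<Sum>f\<leftarrow>Fs. edge_sqdiff f e) < (\<Sum>f\<leftarrow>Fs. weighted_variance V m0 f) * (d e)\<^sup>2"
      if e: "e \<in> E" for e
    proof -
      have "S * (\<Sum>f\<leftarrow>Fs. edge_sqdiff f e) / (d e)\<^sup>2 < (\<Sum>f\<leftarrow>Fs. weighted_variance V m0 f)"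
        using neg e unfolding sum_Q by force
      moreover have "(d e)\<^sup>2 > 0"
        using d e by force
      ultimately show ?thesis
        by (simp add: pos_divide_less_eq)
    qed
    then show False
      using exists_family_by_rescaling[OF E d less_imp_le[OF S(1)]] none by blast
  qed
  ultimately obtain y where y: "\<forall>e\<in>E. y e \<ge> 0" "sum y E = 1"
    and y_nonneg: "\<forall>Fs. (\<Sum>e\<in>E. y e * (\<Sum>f\<leftarrow>Fs. Q e f)) \<ge> 0"
    using convex_like_nonneg_combination[OF simple_graph_finite_edges[OF sg] E] by blast
  have "weighted_variance V m0 f \<le> S * (\<Sum>e\<in>E. y e * edge_sqdiff f e / (d e)\<^sup>2)" for f
  proof -
    have "0 \<le> (\<Sum>e\<in>E. y e * Q e f)"
      using y_nonneg[rule_format, of "[f]"] by simp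
    also have "\<dots> = S * (\<Sum>e\<in>E. y e * edge_sqdiff f e / (d e)\<^sup>2) - sum y E * weighted_variance V m0 f"
      unfolding Q_def
      by (simp add: right_diff_distrib sum_subtractf sum_distrib_left sum_distrib_right mult.left_commute)
    finally show ?thesis
      using y(2) by simp
  qed
  then show False
    using Dsq_le_sigma_inv_of_dual_certificate[OF sg cg m0 d uv S(1) y] S(2) by force
qed

definition family_embedding :: "'a set \<Rightarrow> ('a \<Rightarrow> 'a \<Rightarrow> real) \<Rightarrow> 'a \<Rightarrow> real \<Rightarrow> 'a \<Rightarrow> 'a \<Rightarrow> real" where
  "family_embedding J F z b u i = (if i \<in> J then F i u else if i = z then b else 0)"

lemma sum_family_embedding:
  assumes "finite V" "z \<in> V" "J \<subseteq> V - {z}" "P 0 0 = 0"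
  shows "(\<Sum>i\<in>V. P (family_embedding J F z b u i) (family_embedding J F z b v i))
    = (\<Sum>j\<in>J. P (F j u) (F j v)) + P b b"
proof -
  let ?\<phi> = "family_embedding J F z b"
  have zJ: "z \<in> V - J"
    using assms(2,3) by blast
  have "(\<Sum>i\<in>V. P (?\<phi> u i) (?\<phi> v i)) = (\<Sum>i\<in>V - J. P (?\<phi> u i) (?\<phi> v i)) + (\<Sum>i\<in>J. P (?\<phi> u i) (?\<phi> v i))"
    using assms(1,3) by (intro sum.subset_diff) auto
  also have "(\<Sum>i\<in>V - J. P (?\<phi> u i) (?\<phi> v i)) = P (?\<phi> u z) (?\<phi> v z) + (\<Sum>i\<in>V - J - {z}. P (?\<phi> u i) (?\<phi> v i))"
    using zJ assms(1) by (intro sum.remove) auto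
  also have "(\<Sum>i\<in>V - J - {z}. P (?\<phi> u i) (?\<phi> v i)) = 0"
    using assms(4) by (intro sum.neutral) (simp add: family_embedding_def)
  also have "(\<Sum>i\<in>J. P (?\<phi> u i) (?\<phi> v i)) = (\<Sum>j\<in>J. P (F j u) (F j v))"
    by (intro sum.cong refl) (simp add: family_embedding_def)
  finally show ?thesis
    using zJ by (simp add: family_embedding_def add.commute)
qed

lemma bary_family_embedding:
  assumes "total_mass V m0 \<noteq> 0" "J \<subseteq> V - {z}" "centered_family V m0 J F"
  shows "bary V m0 (family_embedding J F z b) i = (if i = z then b else 0)"
proof (cases "i \<in> J")
  case True
  then show ?thesis
    using assms(2,3) unfolding bary_def family_embedding_def centered_family_def by auto
next
  case False
  then show ?thesis
    using assms(1) unfolding bary_def family_embedding_def total_mass_def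
    by (simp add: sum_distrib_right[symmetric])
qed

lemma admissible_map_of_centered_family:
  assumes V: "finite V" "z \<in> V" and M: "total_mass V m0 > 0"
    and J: "J \<subseteq> V - {z}" and F: "centered_family V m0 J F"
    and spread: "\<forall>u v. {u, v} \<in> E \<longrightarrow> (\<Sum>j\<in>J. (F j u - F j v)\<^sup>2) \<le> (d {u, v})\<^sup>2"
    and d: "\<forall>e\<in>E. d e \<ge> 0"
    and S: "(\<Sum>j\<in>J. weighted_variance V m0 (F j)) = S" "0 \<le> S" "S \<le> total_mass V m0"
  defines "\<phi> \<equiv> family_embedding J F z (sqrt (1 - S / total_mass V m0))"
  shows "admissible_map V E m0 d \<phi>" "vnorm2 V (bary V m0 \<phi>) = 1 - S / total_mass V m0"
proof -
  define b where "b = sqrt (1 - S / total_mass V m0)"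
  have b: "b\<^sup>2 = 1 - S / total_mass V m0"
    unfolding b_def using S(3) M by simp
  have \<phi>: "\<phi> = family_embedding J F z b"
    unfolding \<phi>_def b_def ..
  have norm: "vnorm2 V (\<phi> u) = (\<Sum>j\<in>J. (F j u)\<^sup>2) + b\<^sup>2" for u
    unfolding vnorm2_def \<phi> using sum_family_embedding[OF V J, of "\<lambda>x _. x\<^sup>2"] by simp
  have "(\<Sum>u\<in>V. m0 u * vnorm2 V (\<phi> u))
      = (\<Sum>u\<in>V. m0 u * (\<Sum>j\<in>J. (F j u)\<^sup>2)) + total_mass V m0 * b\<^sup>2"
    unfolding norm total_mass_def by (simp add: distrib_left sum.distrib sum_distrib_right)
  also have "(\<Sum>u\<in>V. m0 u * (\<Sum>j\<in>J. (F j u)\<^sup>2)) = (\<Sum>j\<in>J. \<Sum>u\<in>V. m0 u * (F j u)\<^sup>2)"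
    unfolding sum_distrib_left by (rule sum.swap)
  also have "\<dots> = S"
    using S(1) F M unfolding centered_family_def by (simp add: weighted_variance_centered)
  also have "S + total_mass V m0 * b\<^sup>2 = total_mass V m0"
    using M unfolding b by (simp add: field_simps)
  finally have mass: "(\<Sum>u\<in>V. m0 u * vnorm2 V (\<phi> u)) = total_mass V m0" .
  have "vnorm V (\<lambda>i. \<phi> u i - \<phi> v i) \<le> d {u, v}" if "{u, v} \<in> E" for u v
  proof -
    have "vnorm2 V (\<lambda>i. \<phi> u i - \<phi> v i) \<le> (d {u, v})\<^sup>2"
      using sum_family_embedding[OF V J, of "\<lambda>x y. (x - y)\<^sup>2"] spread that
      unfolding vnorm2_def \<phi> by simp
    then show ?thesis
      unfolding vnorm_def using d that by (metis real_sqrt_abs real_sqrt_le_mono abs_of_nonneg)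
  qed
  then show "admissible_map V E m0 d \<phi>"
    unfolding admissible_map_def using mass by blast
  have "vnorm2 V (bary V m0 \<phi>) = b\<^sup>2"
    using V M bary_family_embedding[OF _ J F] unfolding vnorm2_def \<phi>
    by (simp add: if_distrib[of "\<lambda>x. x\<^sup>2"] cong: if_cong)
  then show "vnorm2 V (bary V m0 \<phi>) = 1 - S / total_mass V m0"
    unfolding b .
qed

lemma delta_inv_le_of_sigma_lt:
  assumes sg: "simple_graph V E" and cg: "connected_graph V E" and m0: "\<forall>u\<in>V. m0 u > 0"
    and d: "\<forall>e\<in>E. d e > 0" and uv: "u \<in> V" "v \<in> V" "u \<noteq> v"
    and S: "0 < S" "S \<le> total_mass V m0" "S * sigma_inv V E m0 d < Dsq E d"
  shows "delta_inv V E m0 d \<le> 1 - S / total_mass V m0"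
proof -
  have fV: "finite V"
    using simple_graph_finite[OF sg] .
  obtain Fs where Fs_spread: "\<forall>e\<in>E. (\<Sum>f\<leftarrow>Fs. edge_sqdiff f e) \<le> (d e)\<^sup>2"
    and Fs_variance: "(\<Sum>f\<leftarrow>Fs. weighted_variance V m0 f) = S"
    using exists_family_of_sigma_lt[OF sg cg m0 d uv S(1,3)] by blast
  have list_as_family: "(\<Sum>f\<leftarrow>Fs. Q f) = (\<Sum>j<length Fs. Q (Fs ! j))" for Q :: "('a \<Rightarrow> real) \<Rightarrow> real"
    by (simp add: sum_list_sum_nth atLeast0LessThan)
  obtain J G where J: "J \<subseteq> V - {u}" and G: "centered_family V m0 J G"
    and G_spread: "\<forall>a\<in>V. \<forall>b\<in>V.
      (\<Sum>j\<in>J. (G j a - G j b)\<^sup>2) = (\<Sum>j<length Fs. ((Fs ! j) a - (Fs ! j) b)\<^sup>2)"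
    and G_variance: "(\<Sum>j\<in>J. weighted_variance V m0 (G j)) = (\<Sum>j<length Fs. weighted_variance V m0 (Fs ! j))"
    using exists_centered_family_in_complement[OF fV uv(1) m0 finite_lessThan[of "length Fs"], of "(!) Fs"] by blast
  have spread: "\<forall>a b. {a, b} \<in> E \<longrightarrow> (\<Sum>j\<in>J. (G j a - G j b)\<^sup>2) \<le> (d {a, b})\<^sup>2"
  proof (intro allI impI)
    fix a b assume ab: "{a, b} \<in> E"
    have "(\<Sum>j\<in>J. (G j a - G j b)\<^sup>2) = (\<Sum>f\<leftarrow>Fs. edge_sqdiff f {a, b})"
      using G_spread simple_graph_edge_vertices[OF sg ab] list_as_family[of "\<lambda>f. edge_sqdiff f {a, b}"]
      by simp
    then show "(\<Sum>j\<in>J. (G j a - G j b)\<^sup>2) \<le> (d {a, b})\<^sup>2"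
      using Fs_spread[rule_format, OF ab] by simp
  qed
  have variance: "(\<Sum>j\<in>J. weighted_variance V m0 (G j)) = S"
    using G_variance Fs_variance list_as_family by simp
  have M: "total_mass V m0 > 0"
    using total_mass_pos[OF fV _ m0] uv(1) by blast
  have d_nonneg: "\<forall>e\<in>E. d e \<ge> 0"
    using d by (simp add: less_imp_le)
  show ?thesis
    using admissible_map_of_centered_family[OF fV uv(1) M J G spread d_nonneg variance] S(1,2)
      delta_inv_le by (metis less_imp_le)
qed

lemma delta_inv_upper_bound:
  assumes sg: "simple_graph V E" and cg: "connected_graph V E" and m0: "\<forall>u\<in>V. m0 u > 0"
    and d: "\<forall>e\<in>E. d e > 0" and uv: "u \<in> V" "v \<in> V" "u \<noteq> v"
  shows "delta_inv V E m0 d \<le> max (1 - Dsq E d / total_mass V m0 / sigma_inv V E m0 d) 0"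
proof -
  define M D \<sigma> \<delta> where "M = total_mass V m0" and "D = Dsq E d" and "\<sigma> = sigma_inv V E m0 d"
    and "\<delta> = delta_inv V E m0 d"
  have M: "M > 0"
    using total_mass_pos[OF simple_graph_finite[OF sg] _ m0] uv M_def by auto
  have \<sigma>: "\<sigma> > 0"
    using sigma_inv_pos[OF sg cg m0 d uv] \<sigma>_def by simp
  have D: "D > 0"
    using Dsq_pos[OF sg connected_graph_edges_nonempty[OF cg uv] d] D_def by simp
  define s0 where "s0 = min M (D / \<sigma>)"
  have "s0 \<le> M * (1 - \<delta>)"
  proof (rule dense_le_bounded)
    show "0 < s0"
      unfolding s0_def using M D \<sigma> by simp
    fix S assume "0 < S" "S < s0"
    then have "\<delta> \<le> 1 - S / M"
      using delta_inv_le_of_sigma_lt[OF sg cg m0 d uv, of S] \<sigma>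
      unfolding s0_def M_def D_def \<sigma>_def \<delta>_def by (simp add: pos_less_divide_eq)
    then show "S \<le> M * (1 - \<delta>)"
      using M by (simp add: field_simps)
  qed
  then have "\<delta> \<le> 1 - s0 / M"
    using M by (simp add: field_simps)
  also have "\<dots> = max (1 - D / M / \<sigma>) 0"
  proof (cases "D / \<sigma> \<le> M")
    case True
    then have "D / \<sigma> / M \<le> 1"
      using M by (simp only: divide_le_eq_1_pos)
    then show ?thesis
      unfolding s0_def using True by (simp add: mult.commute)
  next
    case False
    then have "1 < D / \<sigma> / M"
      using M by (simp only: less_divide_eq_1_pos not_le)
    then show ?thesis
      unfolding s0_def using False M by (simp add: mult.commute)
  qed
  finally show ?thesis
    unfolding M_def D_def \<sigma>_def \<delta>_def .
qed

theorem corollary2p5: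
  fixes V :: "'a set" and E :: "'a set set"
    and m0 :: "'a \<Rightarrow> real" and d :: "'a set \<Rightarrow> real"
  assumes "simple_graph V E"
    and "connected_graph V E"
    and "\<forall>u\<in>V. m0 u > 0"
    and "\<forall>e\<in>E. d e > 0"
  shows "delta_inv V E m0 d =
    max (1 - (Dsq E d / total_mass V m0) / sigma_inv V E m0 d) 0"
proof (cases "\<exists>u\<in>V. \<exists>v\<in>V. u \<noteq> v")
  case True
  then obtain u v where uv: "u \<in> V" "v \<in> V" "u \<noteq> v"
    by blast
  show ?thesis
    using delta_inv_lower_bound[OF assms uv] delta_inv_upper_bound[OF assms uv] by linarith
next
  case False
  moreover have "V \<noteq> {}"
    using assms(2) unfolding connected_graph_def by blast
  ultimately obtain w where V: "V = {w}"
    by blast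
  then have "E = {}"
    using assms(1) simple_graph_singleton_edges by simp
  then have "Dsq E d = 0"
    unfolding Dsq_def by simp
  \<comment> \<open>so the right-hand side is 1, whatever junk value \<open>sigma_inv\<close> takes without edges\<close>
  then show ?thesis
    using delta_inv_singleton assms(1,3) V by simp
qed

end
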